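(* Let $\varepsilon\in\{0,\tfrac12\}$. Every skewsymmetric biderivation $f$ of $\mathcal{SV}(\varepsilon)$ is inner, i.e. there is $\lambda\in\mathbb{C}$ with $f(x,y)=\lambda[x,y]$ for all $x,y\in\mathcal{SV}(\varepsilon)$.
   Context: For $\varepsilon\in\{0,\frac12\}$, $\mathcal{SV}(\varepsilon)$ is the complex Lie algebra with basis $\{L_i,Y_j,M_i\mid i\in\mathbb{Z},\ j\in\varepsilon+\mathbb{Z}\}$ and brackets $[L_m,L_n]=(m-n)L_{m+n}$, $[L_m,Y_n]=(\frac12 m-n)Y_{m+n}$, $[L_m,M_n]=-nM_{m+n}$, $[Y_m,Y_n]=(m-n)M_{m+n}$, $[Y_m,M_n]=[M_m,M_n]=0$. A biderivation of a Lie algebra $L$ is a bilinear map $f:L\times L\to L$ with $f([x,y],z)=[x,f(y,z)]+[f(x,z),y]$ and $f(x,[y,z])=[f(x,y),z]+[y,f(x,z)]$ for all $x,y,z\in L$; it is skewsymmetric if $f(x,y)=-f(y,x)$ for all $x,y$. *)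

theory Defs
  imports Complex_Main
begin

text \<open>Basis of SV(eps): L i (i integer), Y j (j real, required to lie in eps + Z),
  M i (i integer). Vectors are finitely supported coefficient functions.\<close>

datatype sv_idx = L int | Y real | M int

definition sv_unit :: "sv_idx \<Rightarrow> sv_idx \<Rightarrow> complex" where
  "sv_unit a = (\<lambda>b. if b = a then 1 else 0)"

definition vscale :: "complex \<Rightarrow> (sv_idx \<Rightarrow> complex) \<Rightarrow> (sv_idx \<Rightarrow> complex)" where
  "vscale c x = (\<lambda>k. c * x k)"

definition vadd :: "(sv_idx \<Rightarrow> complex) \<Rightarrow> (sv_idx \<Rightarrow> complex) \<Rightarrow> (sv_idx \<Rightarrow> complex)" where
  "vadd x y = (\<lambda>k. x k + y k)"

text \<open>Bracket of basis elements. For Y indices m, n in eps + Z one has m + n in Z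
  (since 2 eps is an integer), so floor (m + n) = m + n.\<close>
fun sv_br :: "sv_idx \<Rightarrow> sv_idx \<Rightarrow> sv_idx \<Rightarrow> complex" where
  "sv_br (L m) (L n) = vscale (of_int (m - n)) (sv_unit (L (m + n)))"
| "sv_br (L m) (Y n) = vscale (of_real (of_int m / 2 - n)) (sv_unit (Y (of_int m + n)))"
| "sv_br (Y n) (L m) = vscale (- of_real (of_int m / 2 - n)) (sv_unit (Y (of_int m + n)))"
| "sv_br (L m) (M n) = vscale (- of_int n) (sv_unit (M (m + n)))"
| "sv_br (M n) (L m) = vscale (of_int n) (sv_unit (M (m + n)))"
| "sv_br (Y m) (Y n) = vscale (of_real (m - n)) (sv_unit (M (floor (m + n))))"
| "sv_br (Y m) (M n) = (\<lambda>_. 0)"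
| "sv_br (M n) (Y m) = (\<lambda>_. 0)"
| "sv_br (M m) (M n) = (\<lambda>_. 0)"

definition sv_supp :: "(sv_idx \<Rightarrow> complex) \<Rightarrow> sv_idx set" where
  "sv_supp x = {a. x a \<noteq> 0}"

definition SV :: "real \<Rightarrow> (sv_idx \<Rightarrow> complex) set" where
  "SV eps = {x. finite (sv_supp x) \<and> (\<forall>r. x (Y r) \<noteq> 0 \<longrightarrow> r - eps \<in> \<int>)}"

definition sv_bracket :: "(sv_idx \<Rightarrow> complex) \<Rightarrow> (sv_idx \<Rightarrow> complex) \<Rightarrow> (sv_idx \<Rightarrow> complex)" where
  "sv_bracket x y = (\<lambda>k. \<Sum>a\<in>sv_supp x. \<Sum>b\<in>sv_supp y. x a * y b * sv_br a b k)"

definition sv_bilinear :: "real \<Rightarrow> ((sv_idx \<Rightarrow> complex) \<Rightarrow> (sv_idx \<Rightarrow> complex) \<Rightarrow> (sv_idx \<Rightarrow> complex)) \<Rightarrow> bool" where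
  "sv_bilinear eps f \<longleftrightarrow>
     (\<forall>x\<in>SV eps. \<forall>y\<in>SV eps. f x y \<in> SV eps) \<and>
     (\<forall>x\<in>SV eps. \<forall>y\<in>SV eps. \<forall>z\<in>SV eps. f (vadd x y) z = vadd (f x z) (f y z)) \<and>
     (\<forall>x\<in>SV eps. \<forall>y\<in>SV eps. \<forall>z\<in>SV eps. f x (vadd y z) = vadd (f x y) (f x z)) \<and>
     (\<forall>c. \<forall>x\<in>SV eps. \<forall>y\<in>SV eps. f (vscale c x) y = vscale c (f x y)) \<and>
     (\<forall>c. \<forall>x\<in>SV eps. \<forall>y\<in>SV eps. f x (vscale c y) = vscale c (f x y))"

definition sv_biderivation :: "real \<Rightarrow> ((sv_idx \<Rightarrow> complex) \<Rightarrow> (sv_idx \<Rightarrow> complex) \<Rightarrow> (sv_idx \<Rightarrow> complex)) \<Rightarrow> bool" where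
  "sv_biderivation eps f \<longleftrightarrow> sv_bilinear eps f \<and>
     (\<forall>x\<in>SV eps. \<forall>y\<in>SV eps. \<forall>z\<in>SV eps.
        f (sv_bracket x y) z = vadd (sv_bracket x (f y z)) (sv_bracket (f x z) y)) \<and>
     (\<forall>x\<in>SV eps. \<forall>y\<in>SV eps. \<forall>z\<in>SV eps.
        f x (sv_bracket y z) = vadd (sv_bracket (f x y) z) (sv_bracket y (f x z)))"

definition sv_skew :: "real \<Rightarrow> ((sv_idx \<Rightarrow> complex) \<Rightarrow> (sv_idx \<Rightarrow> complex) \<Rightarrow> (sv_idx \<Rightarrow> complex)) \<Rightarrow> bool" where
  "sv_skew eps f \<longleftrightarrow> (\<forall>x\<in>SV eps. \<forall>y\<in>SV eps. f x y = vscale (-1) (f y x))"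

end

theory Submission
  imports Defs
begin

text \<open>Write \<open>g b = f(L\<^sub>0, b)\<close>. Since \<open>ad L\<^sub>0\<close> acts on basis vectors by minus their
  degree, the biderivation identities make \<open>g b\<close> homogeneous of the degree of \<open>b\<close> and give
  \<open>(deg k - deg a) f(a,b)\<^sub>k = -[a, g b]\<^sub>k\<close>. Comparing this identity for a few well chosen pairs
  of basis vectors yields \<open>g b = -\<lambda> deg(b) b\<close>, where \<open>-\<lambda>\<close> is the \<open>L\<^sub>1\<close>-coefficient of
  \<open>g L\<^sub>1\<close>, and hence \<open>f(a,b) = \<lambda>[a,b]\<close> whenever \<open>deg a \<noteq> deg b\<close>. If \<open>deg a = deg b\<close>, write
  \<open>a\<close> as a multiple of \<open>[L\<^sub>m, y]\<close> with \<open>m\<close> and \<open>deg y\<close> different from \<open>deg a\<close> and apply the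
  derivation rule once more. Bilinearity carries the identity from basis vectors to all of
  \<open>SV(\<epsilon>)\<close>.\<close>

section \<open>Basis vectors, supports and the bracket\<close>

definition sv_basis :: "real \<Rightarrow> sv_idx \<Rightarrow> bool" where
  "sv_basis eps a \<longleftrightarrow> (case a of Y r \<Rightarrow> r - eps \<in> \<int> | _ \<Rightarrow> True)"

lemma sv_basis_L [simp]: "sv_basis eps (L n)"
  and sv_basis_M [simp]: "sv_basis eps (M n)"
  by (simp_all add: sv_basis_def)

fun sv_deg :: "sv_idx \<Rightarrow> real" where
  "sv_deg (L n) = of_int n"
| "sv_deg (Y r) = r"
| "sv_deg (M n) = of_int n"

lemma sv_supp_sv_unit [simp]: "sv_supp (sv_unit a) = {a}"
  by (auto simp: sv_supp_def sv_unit_def)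

lemma sv_supp_vscale_subset: "sv_supp (vscale c x) \<subseteq> sv_supp x"
  by (auto simp: sv_supp_def vscale_def)

lemma sv_supp_vadd_subset: "sv_supp (vadd x y) \<subseteq> sv_supp x \<union> sv_supp y"
  by (auto simp: sv_supp_def vadd_def)

lemma sv_supp_zero [simp]: "sv_supp (\<lambda>_. 0) = {}"
  by (simp add: sv_supp_def)

lemma finite_sv_supp_sv_br: "finite (sv_supp (sv_br a b))"
  by (cases a; cases b) (auto intro: finite_subset[OF sv_supp_vscale_subset])

lemma SV_finite_supp: "x \<in> SV eps \<Longrightarrow> finite (sv_supp x)"
  by (simp add: SV_def)

lemma sv_unit_in_SV: "sv_basis eps a \<Longrightarrow> sv_unit a \<in> SV eps"
  by (simp add: SV_def) (auto simp: sv_basis_def sv_unit_def)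

lemma vscale_in_SV: "x \<in> SV eps \<Longrightarrow> vscale c x \<in> SV eps"
  using finite_subset[OF sv_supp_vscale_subset] by (auto simp: SV_def vscale_def)

lemma fun_upd_zero_in_SV:
  assumes "x \<in> SV eps"
  shows "x(a := 0) \<in> SV eps"
proof -
  have "sv_supp (x(a := 0)) \<subseteq> sv_supp x" by (auto simp: sv_supp_def)
  with assms show ?thesis by (auto simp: SV_def intro: finite_subset)
qed

lemma vscale_vscale [simp]: "vscale a (vscale b x) = vscale (a * b) x"
  by (simp add: vscale_def fun_eq_iff)

lemma sum_eq_single_nonzero:
  assumes "finite S" "\<And>b. b \<in> S \<Longrightarrow> h b \<noteq> 0 \<Longrightarrow> b = d" "d \<notin> S \<Longrightarrow> h d = 0"
  shows "sum h S = (h d :: 'a::comm_monoid_add)"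
proof (cases "d \<in> S")
  case True
  have "sum h (S - {d}) = 0" by (rule sum.neutral) (use assms(2) in blast)
  then show ?thesis using assms(1) True by (simp add: sum.remove)
qed (use assms in \<open>auto intro: sum.neutral\<close>)

lemma sv_bracket_eq_sum_superset:
  assumes "finite A" "finite B" "sv_supp x \<subseteq> A" "sv_supp y \<subseteq> B"
  shows "sv_bracket x y k = (\<Sum>a\<in>A. \<Sum>b\<in>B. x a * y b * sv_br a b k)"
proof -
  have "sv_bracket x y k = (\<Sum>a\<in>sv_supp x. \<Sum>b\<in>B. x a * y b * sv_br a b k)"
    unfolding sv_bracket_def
    by (intro sum.cong refl sum.mono_neutral_left) (use assms in \<open>auto simp: sv_supp_def\<close>)
  also have "\<dots> = (\<Sum>a\<in>A. \<Sum>b\<in>B. x a * y b * sv_br a b k)"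
    by (rule sum.mono_neutral_left) (use assms in \<open>auto simp: sv_supp_def\<close>)
  finally show ?thesis .
qed

lemma sv_bracket_zero_left [simp]: "sv_bracket (\<lambda>_. 0) y = (\<lambda>_. 0)"
  and sv_bracket_zero_right [simp]: "sv_bracket y (\<lambda>_. 0) = (\<lambda>_. 0)"
  by (simp_all add: sv_bracket_def)

lemma sv_bracket_units [simp]: "sv_bracket (sv_unit a) (sv_unit b) = sv_br a b"
  by (rule ext) (simp only: sv_bracket_def sv_supp_sv_unit, simp add: sv_unit_def)

lemma sv_bracket_unit_left: "sv_bracket (sv_unit a) v k = (\<Sum>b\<in>sv_supp v. v b * sv_br a b k)"
  by (simp only: sv_bracket_def sv_supp_sv_unit, simp add: sv_unit_def)

lemma sv_br_antisym: "sv_br a b k = - sv_br b a k"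
  by (cases a; cases b) (auto simp: vscale_def sv_unit_def add.commute)

lemma sv_bracket_antisym:
  assumes "finite (sv_supp x)" "finite (sv_supp y)"
  shows "sv_bracket x y k = - sv_bracket y x k"
  unfolding sv_bracket_def
  by (subst sum.swap, simp add: sum_negf[symmetric], intro sum.cong refl)
    (subst sv_br_antisym, simp)

lemma sv_bracket_vscale_right:
  assumes "finite (sv_supp x)" "finite (sv_supp y)"
  shows "sv_bracket x (vscale c y) = vscale c (sv_bracket x y)"
proof (rule ext)
  fix k
  have "sv_bracket x (vscale c y) k = (\<Sum>a\<in>sv_supp x. \<Sum>b\<in>sv_supp y. x a * vscale c y b * sv_br a b k)"
    by (rule sv_bracket_eq_sum_superset) (use assms sv_supp_vscale_subset in auto)
  then show "sv_bracket x (vscale c y) k = vscale c (sv_bracket x y) k"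
    by (simp add: vscale_def sv_bracket_def sum_distrib_left algebra_simps)
qed

lemma sv_bracket_vscale_left:
  assumes "finite (sv_supp x)" "finite (sv_supp y)"
  shows "sv_bracket (vscale c x) y = vscale c (sv_bracket x y)"
proof (rule ext)
  fix k
  have "sv_bracket (vscale c x) y k = (\<Sum>a\<in>sv_supp x. \<Sum>b\<in>sv_supp y. vscale c x a * y b * sv_br a b k)"
    by (rule sv_bracket_eq_sum_superset) (use assms sv_supp_vscale_subset in auto)
  then show "sv_bracket (vscale c x) y k = vscale c (sv_bracket x y) k"
    by (simp add: vscale_def sv_bracket_def sum_distrib_left algebra_simps)
qed

lemma sv_bracket_vadd_left:
  assumes "finite (sv_supp x)" "finite (sv_supp y)" "finite (sv_supp z)"
  shows "sv_bracket (vadd x y) z = vadd (sv_bracket x z) (sv_bracket y z)"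
proof (rule ext)
  fix k
  let ?A = "sv_supp x \<union> sv_supp y"
  have "sv_bracket (vadd x y) z k = (\<Sum>a\<in>?A. \<Sum>b\<in>sv_supp z. vadd x y a * z b * sv_br a b k)"
    by (rule sv_bracket_eq_sum_superset) (use assms sv_supp_vadd_subset in auto)
  also have "\<dots> = (\<Sum>a\<in>?A. \<Sum>b\<in>sv_supp z. x a * z b * sv_br a b k)
                 + (\<Sum>a\<in>?A. \<Sum>b\<in>sv_supp z. y a * z b * sv_br a b k)"
    by (simp add: vadd_def sum.distrib[symmetric] algebra_simps)
  also have "\<dots> = sv_bracket x z k + sv_bracket y z k"
    by (subst (1 2) sv_bracket_eq_sum_superset[where A = ?A and B = "sv_supp z"]) (use assms in auto)
  finally show "sv_bracket (vadd x y) z k = vadd (sv_bracket x z) (sv_bracket y z) k"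
    by (simp add: vadd_def)
qed

lemma sv_bracket_vadd_right:
  assumes "finite (sv_supp x)" "finite (sv_supp y)" "finite (sv_supp z)"
  shows "sv_bracket z (vadd x y) = vadd (sv_bracket z x) (sv_bracket z y)"
proof (rule ext)
  fix k
  let ?B = "sv_supp x \<union> sv_supp y"
  have "sv_bracket z (vadd x y) k = (\<Sum>a\<in>sv_supp z. \<Sum>b\<in>?B. z a * vadd x y b * sv_br a b k)"
    by (rule sv_bracket_eq_sum_superset) (use assms sv_supp_vadd_subset in auto)
  also have "\<dots> = (\<Sum>a\<in>sv_supp z. \<Sum>b\<in>?B. z a * x b * sv_br a b k)
                 + (\<Sum>a\<in>sv_supp z. \<Sum>b\<in>?B. z a * y b * sv_br a b k)"
    by (simp add: vadd_def sum.distrib[symmetric] algebra_simps)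
  also have "\<dots> = sv_bracket z x k + sv_bracket z y k"
    by (subst (1 2) sv_bracket_eq_sum_superset[where A = "sv_supp z" and B = ?B]) (use assms in auto)
  finally show "sv_bracket z (vadd x y) k = vadd (sv_bracket z x) (sv_bracket z y) k"
    by (simp add: vadd_def)
qed

lemma sv_bracket_unit_vscale_unit: "sv_bracket (sv_unit a) (vscale c (sv_unit b)) = vscale c (sv_br a b)"
  by (simp add: sv_bracket_vscale_right)

lemma sv_bracket_vscale_unit_unit: "sv_bracket (vscale c (sv_unit a)) (sv_unit b) = vscale c (sv_br a b)"
  by (simp add: sv_bracket_vscale_left)

lemma sv_bracket_unit_left_single:
  assumes "finite (sv_supp v)" "\<And>b. b \<in> sv_supp v \<Longrightarrow> sv_br a b k \<noteq> 0 \<Longrightarrow> b = d"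
  shows "sv_bracket (sv_unit a) v k = v d * sv_br a d k"
  unfolding sv_bracket_unit_left
  by (rule sum_eq_single_nonzero) (use assms in \<open>auto simp: sv_supp_def\<close>)

lemma Ints_add_of_shifted:
  fixes eps :: real
  assumes "eps = 0 \<or> eps = 1/2" "s - eps \<in> \<int>" "t - eps \<in> \<int>"
  shows "s + t \<in> \<int>"
proof -
  have "2 * eps \<in> {0, 1}" using assms(1) by auto
  then have "2 * eps \<in> \<int>" by auto
  moreover have "s + t = (s - eps) + (t - eps) + 2 * eps" by simp
  ultimately show ?thesis using assms by (metis Ints_add)
qed

lemma sv_bracket_L_coeff_L:
  assumes "finite (sv_supp v)"
  shows "sv_bracket (sv_unit (L m)) v (L n) = of_int (2 * m - n) * v (L (n - m))"
proof -
  have "sv_br (L m) b (L n) \<noteq> 0 \<Longrightarrow> b = L (n - m)" for b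
    by (cases b) (auto simp: vscale_def sv_unit_def split: if_splits)
  then have "sv_bracket (sv_unit (L m)) v (L n) = v (L (n - m)) * sv_br (L m) (L (n - m)) (L n)"
    by (metis sv_bracket_unit_left_single[OF assms])
  then show ?thesis
    by (simp add: vscale_def sv_unit_def)
qed

lemma sv_bracket_L_coeff_Y:
  assumes "finite (sv_supp v)"
  shows "sv_bracket (sv_unit (L m)) v (Y r) = of_real (3 * of_int m / 2 - r) * v (Y (r - of_int m))"
proof -
  have "sv_br (L m) b (Y r) \<noteq> 0 \<Longrightarrow> b = Y (r - of_int m)" for b
    by (cases b) (auto simp: vscale_def sv_unit_def split: if_splits)
  then have "sv_bracket (sv_unit (L m)) v (Y r) = v (Y (r - of_int m)) * sv_br (L m) (Y (r - of_int m)) (Y r)"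
    by (metis sv_bracket_unit_left_single[OF assms])
  then show ?thesis
    by (simp add: vscale_def sv_unit_def)
qed

lemma sv_bracket_L_coeff_M:
  assumes "finite (sv_supp v)"
  shows "sv_bracket (sv_unit (L m)) v (M n) = of_int (m - n) * v (M (n - m))"
proof -
  have "sv_br (L m) b (M n) \<noteq> 0 \<Longrightarrow> b = M (n - m)" for b
    by (cases b) (auto simp: vscale_def sv_unit_def split: if_splits)
  then have "sv_bracket (sv_unit (L m)) v (M n) = v (M (n - m)) * sv_br (L m) (M (n - m)) (M n)"
    by (metis sv_bracket_unit_left_single[OF assms])
  then show ?thesis
    by (simp add: vscale_def sv_unit_def)
qed

lemma sv_bracket_Y_coeff_Y:
  assumes "finite (sv_supp v)" "r - s = of_int j"
  shows "sv_bracket (sv_unit (Y s)) v (Y r) = - of_real (of_int j / 2 - s) * v (L j)"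
proof -
  have "sv_br (Y s) b (Y r) \<noteq> 0 \<Longrightarrow> b = L j" for b
    using assms(2) by (cases b) (auto simp: vscale_def sv_unit_def split: if_splits)
  then have "sv_bracket (sv_unit (Y s)) v (Y r) = v (L j) * sv_br (Y s) (L j) (Y r)"
    by (metis sv_bracket_unit_left_single[OF assms(1)])
  then show ?thesis
    using assms(2) by (simp add: vscale_def sv_unit_def)
qed

lemma sv_bracket_Y_coeff_M:
  assumes eps: "eps = 0 \<or> eps = 1/2" and v: "v \<in> SV eps" and s: "s - eps \<in> \<int>"
  shows "sv_bracket (sv_unit (Y s)) v (M n) = of_real (2 * s - of_int n) * v (Y (of_int n - s))"
proof -
  have "b = Y (of_int n - s)" if "b \<in> sv_supp v" "sv_br (Y s) b (M n) \<noteq> 0" for b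
  proof (cases b)
    case (Y t)
    with that v have "t - eps \<in> \<int>" by (auto simp: SV_def sv_supp_def)
    then obtain i where "s + t = of_int i" using Ints_add_of_shifted[OF eps s] by (metis Ints_cases)
    then show ?thesis using that Y by (auto simp: vscale_def sv_unit_def split: if_splits)
  qed (use that in \<open>auto simp: vscale_def sv_unit_def\<close>)
  then have "sv_bracket (sv_unit (Y s)) v (M n)
      = v (Y (of_int n - s)) * sv_br (Y s) (Y (of_int n - s)) (M n)"
    by (rule sv_bracket_unit_left_single[OF SV_finite_supp[OF v]])
  then show ?thesis
    by (simp add: vscale_def sv_unit_def)
qed

lemma sv_bracket_M_coeff_M:
  assumes "finite (sv_supp v)"
  shows "sv_bracket (sv_unit (M s)) v (M n) = of_int s * v (L (n - s))"
proof -
  have "sv_br (M s) b (M n) \<noteq> 0 \<Longrightarrow> b = L (n - s)" for b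
    by (cases b) (auto simp: vscale_def sv_unit_def split: if_splits)
  then have "sv_bracket (sv_unit (M s)) v (M n) = v (L (n - s)) * sv_br (M s) (L (n - s)) (M n)"
    by (metis sv_bracket_unit_left_single[OF assms])
  then show ?thesis
    by (simp add: vscale_def sv_unit_def)
qed

lemma sv_bracket_M_coeff_Y: "sv_bracket (sv_unit (M s)) v (Y r) = 0"
proof -
  have "sv_br (M s) b (Y r) = 0" for b
    by (cases b) (auto simp: vscale_def sv_unit_def split: if_splits)
  then show ?thesis by (simp add: sv_bracket_unit_left)
qed

lemma sv_bracket_L0_coeff:
  "finite (sv_supp v) \<Longrightarrow> sv_bracket (sv_unit (L 0)) v k = - of_real (sv_deg k) * v k"
  by (cases k) (simp_all add: sv_bracket_L_coeff_L sv_bracket_L_coeff_Y sv_bracket_L_coeff_M)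

lemma sv_br_L0: "sv_br (L 0) b = vscale (- of_real (sv_deg b)) (sv_unit b)"
  by (cases b) (auto simp: vscale_def)


section \<open>Grading, the Jacobi identity and linear extension\<close>

lemma sv_br_homogeneous:
  fixes eps :: real
  assumes eps: "eps = 0 \<or> eps = 1/2" and a: "sv_basis eps a" and b: "sv_basis eps b"
    and nz: "sv_br a b k \<noteq> 0"
  shows "sv_deg k = sv_deg a + sv_deg b"
proof (cases a; cases b)
  fix s t assume ab: "a = Y s" "b = Y t"
  have "s + t \<in> \<int>" using Ints_add_of_shifted[OF eps] a b ab by (auto simp: sv_basis_def)
  then obtain i where i: "s + t = of_int i" by (metis Ints_cases)
  then have "floor (s + t) = i" by simp
  then show ?thesis using nz ab i by (auto simp: vscale_def sv_unit_def split: if_splits)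
qed (use nz in \<open>auto simp: vscale_def sv_unit_def split: if_splits\<close>)

lemma sv_br_jacobi_L:
  fixes eps :: real
  assumes eps: "eps = 0 \<or> eps = 1/2" and y: "sv_basis eps y" and b: "sv_basis eps b"
  shows "vadd (sv_bracket (sv_unit (L m)) (sv_br y b)) (sv_bracket (sv_br (L m) b) (sv_unit y))
       = sv_bracket (sv_br (L m) y) (sv_unit b)"
proof (cases y; cases b)
  fix s t assume yb: "y = Y s" "b = Y t"
  have "s + t \<in> \<int>" using Ints_add_of_shifted[OF eps] y b yb by (auto simp: sv_basis_def)
  then obtain i where i: "s + t = of_int i" by (metis Ints_cases)
  moreover have "of_int m + t + s = of_int (m + i)" "of_int m + s + t = of_int (m + i)"
    using i by simp_all
  ultimately have "floor (s + t) = i" "floor (t + s) = i"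
    "floor (of_int m + t + s) = m + i" "floor (of_int m + s + t) = m + i"
    by (simp_all only: floor_of_int add.commute)
  moreover have "(of_int i :: complex) = of_real s + of_real t"
    using i by (metis of_real_add of_real_of_int_eq)
  ultimately show ?thesis using yb i
    by (simp add: sv_bracket_unit_vscale_unit sv_bracket_vscale_unit_unit)
      (simp add: fun_eq_iff vadd_def vscale_def sv_unit_def field_simps)
qed (simp add: sv_bracket_unit_vscale_unit sv_bracket_vscale_unit_unit,
     simp add: fun_eq_iff vadd_def vscale_def sv_unit_def algebra_simps, (simp add: field_simps)?)+

lemma exists_sv_br_L_eq_unit:
  fixes eps :: real
  assumes a: "sv_basis eps a"
  shows "\<exists>m y c. sv_br (L m) y = vscale c (sv_unit a) \<and> c \<noteq> 0 \<and> sv_basis eps y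
               \<and> of_int m \<noteq> sv_deg a \<and> sv_deg y \<noteq> sv_deg a"
proof -
  define m :: int where "m = (if sv_deg a > 0 then -1 else 1)"
  have m: "of_int m \<noteq> sv_deg a" "m \<noteq> 0" by (auto simp: m_def)
  show ?thesis
  proof (cases a)
    case (L p)
    have "m - (p - m) \<noteq> 0" using L by (auto simp: m_def)
    then have "(of_int (m - (p - m)) :: complex) \<noteq> 0" by (subst of_int_eq_0_iff)
    then have "sv_br (L m) (L (p - m)) = vscale (of_int (m - (p - m))) (sv_unit a)
      \<and> (of_int (m - (p - m)) :: complex) \<noteq> 0 \<and> sv_basis eps (L (p - m))
      \<and> of_int m \<noteq> sv_deg a \<and> sv_deg (L (p - m)) \<noteq> sv_deg a"
      using L m by (auto simp: fun_eq_iff vscale_def sv_unit_def)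
    then show ?thesis by blast
  next
    case (Y p)
    have "of_int m / 2 - (p - of_int m) \<noteq> 0" using Y by (auto simp: m_def)
    then have "(of_real (of_int m / 2 - (p - of_int m)) :: complex) \<noteq> 0" by (subst of_real_eq_0_iff)
    moreover have "sv_basis eps (Y (p - of_int m))" using a Y
      by (simp add: sv_basis_def) (metis Ints_diff Ints_of_int diff_diff_eq add.commute diff_diff_eq2)
    ultimately have "sv_br (L m) (Y (p - of_int m)) = vscale (of_real (of_int m / 2 - (p - of_int m))) (sv_unit a)
      \<and> (of_real (of_int m / 2 - (p - of_int m)) :: complex) \<noteq> 0 \<and> sv_basis eps (Y (p - of_int m))
      \<and> of_int m \<noteq> sv_deg a \<and> sv_deg (Y (p - of_int m)) \<noteq> sv_deg a"
      using Y m by (auto simp: fun_eq_iff vscale_def sv_unit_def)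
    then show ?thesis by blast
  next
    case (M p)
    have "sv_br (L m) (M (p - m)) = vscale (- of_int (p - m)) (sv_unit a)
      \<and> - of_int (p - m) \<noteq> (0::complex) \<and> sv_basis eps (M (p - m))
      \<and> of_int m \<noteq> sv_deg a \<and> sv_deg (M (p - m)) \<noteq> sv_deg a"
      using M m by (auto simp: m_def)
    then show ?thesis by blast
  qed
qed

lemma SV_linear_eq_on_basis:
  fixes hA hB :: "(sv_idx \<Rightarrow> complex) \<Rightarrow> (sv_idx \<Rightarrow> complex)"
  assumes addA: "\<And>x y. x \<in> SV eps \<Longrightarrow> y \<in> SV eps \<Longrightarrow> hA (vadd x y) = vadd (hA x) (hA y)"
    and scaleA: "\<And>c x. x \<in> SV eps \<Longrightarrow> hA (vscale c x) = vscale c (hA x)"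
    and addB: "\<And>x y. x \<in> SV eps \<Longrightarrow> y \<in> SV eps \<Longrightarrow> hB (vadd x y) = vadd (hB x) (hB y)"
    and scaleB: "\<And>c x. x \<in> SV eps \<Longrightarrow> hB (vscale c x) = vscale c (hB x)"
    and basis: "\<And>a. sv_basis eps a \<Longrightarrow> hA (sv_unit a) = hB (sv_unit a)"
    and x: "x \<in> SV eps"
  shows "hA x = hB x"
proof -
  have "\<forall>x\<in>SV eps. sv_supp x = S \<longrightarrow> hA x = hB x" if "finite S" for S
    using that
  proof (induction S rule: finite_induct)
    case empty
    have u: "sv_unit (L 0) \<in> SV eps" by (simp add: sv_unit_in_SV)
    show ?case
    proof (intro ballI impI)
      fix x assume "sv_supp x = {}"
      then have "x = vscale 0 (sv_unit (L 0))" by (auto simp: sv_supp_def vscale_def fun_eq_iff)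
      then show "hA x = hB x" by (simp add: scaleA[OF u] scaleB[OF u]) (simp add: vscale_def)
    qed
  next
    case (insert a S)
    show ?case
    proof (intro ballI impI)
      fix x assume x: "x \<in> SV eps" and supp: "sv_supp x = insert a S"
      have "sv_basis eps a" using x supp by (cases a) (auto simp: sv_basis_def SV_def sv_supp_def)
      then have ua: "sv_unit a \<in> SV eps" by (rule sv_unit_in_SV)
      then have ax: "vscale (x a) (sv_unit a) \<in> SV eps" by (rule vscale_in_SV)
      have rest: "x(a := 0) \<in> SV eps" using x by (rule fun_upd_zero_in_SV)
      have "sv_supp (x(a := 0)) = S" using supp insert.hyps(2) by (auto simp: sv_supp_def)
      then have IH: "hA (x(a := 0)) = hB (x(a := 0))" using insert.IH rest by blast
      have "x = vadd (vscale (x a) (sv_unit a)) (x(a := 0))"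
        by (auto simp: fun_eq_iff vadd_def vscale_def sv_unit_def)
      then show "hA x = hB x"
        using addA[OF ax rest] addB[OF ax rest] scaleA[OF ua] scaleB[OF ua] IH basis[OF \<open>sv_basis eps a\<close>]
        by metis
    qed
  qed
  then show ?thesis using SV_finite_supp[OF x] x by blast
qed


section \<open>Skew-symmetric biderivations\<close>

locale skew_biderivation =
  fixes eps :: real
    and f :: "(sv_idx \<Rightarrow> complex) \<Rightarrow> (sv_idx \<Rightarrow> complex) \<Rightarrow> (sv_idx \<Rightarrow> complex)"
  assumes eps: "eps = 0 \<or> eps = 1/2"
    and biderivation: "sv_biderivation eps f"
    and skew: "sv_skew eps f"
begin

lemma bilinear: "sv_bilinear eps f"
  using biderivation by (simp add: sv_biderivation_def)

lemma f_in_SV: "x \<in> SV eps \<Longrightarrow> y \<in> SV eps \<Longrightarrow> f x y \<in> SV eps"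
  using bilinear by (simp add: sv_bilinear_def)

lemma f_vadd_left: "x \<in> SV eps \<Longrightarrow> y \<in> SV eps \<Longrightarrow> z \<in> SV eps \<Longrightarrow> f (vadd x y) z = vadd (f x z) (f y z)"
  and f_vadd_right: "x \<in> SV eps \<Longrightarrow> y \<in> SV eps \<Longrightarrow> z \<in> SV eps \<Longrightarrow> f x (vadd y z) = vadd (f x y) (f x z)"
  and f_vscale_left: "x \<in> SV eps \<Longrightarrow> y \<in> SV eps \<Longrightarrow> f (vscale c x) y = vscale c (f x y)"
  and f_vscale_right: "x \<in> SV eps \<Longrightarrow> y \<in> SV eps \<Longrightarrow> f x (vscale c y) = vscale c (f x y)"
  using bilinear unfolding sv_bilinear_def by blast+

lemma f_bracket_left: "x \<in> SV eps \<Longrightarrow> y \<in> SV eps \<Longrightarrow> z \<in> SV eps \<Longrightarrow>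
    f (sv_bracket x y) z = vadd (sv_bracket x (f y z)) (sv_bracket (f x z) y)"
  and f_bracket_right: "x \<in> SV eps \<Longrightarrow> y \<in> SV eps \<Longrightarrow> z \<in> SV eps \<Longrightarrow>
    f x (sv_bracket y z) = vadd (sv_bracket (f x y) z) (sv_bracket y (f x z))"
  using biderivation unfolding sv_biderivation_def by blast+

abbreviation F :: "sv_idx \<Rightarrow> sv_idx \<Rightarrow> sv_idx \<Rightarrow> complex" where
  "F a b \<equiv> f (sv_unit a) (sv_unit b)"

definition g :: "sv_idx \<Rightarrow> sv_idx \<Rightarrow> complex" where
  "g b = F (L 0) b"

definition lam :: complex where
  "lam = - g (L 1) (L 1)"

lemma F_in_SV: "sv_basis eps a \<Longrightarrow> sv_basis eps b \<Longrightarrow> F a b \<in> SV eps"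
  by (simp add: f_in_SV sv_unit_in_SV)

lemma F_finite_supp: "sv_basis eps a \<Longrightarrow> sv_basis eps b \<Longrightarrow> finite (sv_supp (F a b))"
  using F_in_SV SV_finite_supp by blast

lemma g_in_SV: "sv_basis eps b \<Longrightarrow> g b \<in> SV eps"
  by (simp add: g_def F_in_SV)

lemma g_finite_supp: "sv_basis eps b \<Longrightarrow> finite (sv_supp (g b))"
  by (simp add: g_def F_finite_supp)

lemma F_antisym:
  assumes "sv_basis eps a" "sv_basis eps b"
  shows "F a b k = - F b a k"
proof -
  have "F a b = vscale (-1) (F b a)"
    using skew sv_unit_in_SV[OF assms(1)] sv_unit_in_SV[OF assms(2)] unfolding sv_skew_def by blast
  then show ?thesis by (simp add: vscale_def fun_eq_iff)
qed

lemma F_self: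
  assumes "sv_basis eps a"
  shows "F a a = (\<lambda>_. 0)"
proof
  fix k
  have "F a a k = - F a a k" by (rule F_antisym[OF assms assms])
  then show "F a a k = 0" by simp
qed

lemma g_L0: "g (L 0) = (\<lambda>_. 0)"
  by (simp add: g_def F_self)

lemma f_vscale_unit_left:
  "sv_basis eps a \<Longrightarrow> sv_basis eps b \<Longrightarrow> f (vscale c (sv_unit a)) (sv_unit b) = vscale c (F a b)"
  and f_vscale_unit_right:
  "sv_basis eps a \<Longrightarrow> sv_basis eps b \<Longrightarrow> f (sv_unit a) (vscale c (sv_unit b)) = vscale c (F a b)"
  by (simp_all add: f_vscale_left f_vscale_right sv_unit_in_SV)

lemma g_homogeneous:
  assumes b: "sv_basis eps b" and k: "sv_deg k \<noteq> sv_deg b"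
  shows "g b k = 0"
proof -
  have "f (sv_unit (L 0)) (sv_bracket (sv_unit (L 0)) (sv_unit b))
      = vadd (sv_bracket (F (L 0) (L 0)) (sv_unit b)) (sv_bracket (sv_unit (L 0)) (F (L 0) b))"
    by (rule f_bracket_right) (simp_all add: sv_unit_in_SV b)
  then have "vscale (- of_real (sv_deg b)) (g b) = sv_bracket (sv_unit (L 0)) (g b)"
    using b by (simp add: sv_br_L0 f_vscale_unit_right F_self g_def vadd_def)
  then have "- of_real (sv_deg b) * g b k = - of_real (sv_deg k) * g b k"
    by (simp add: fun_eq_iff sv_bracket_L0_coeff g_finite_supp b vscale_def)
  then show ?thesis using k by auto
qed

lemma F_deg_identity:
  assumes a: "sv_basis eps a" and b: "sv_basis eps b"
  shows "of_real (sv_deg k - sv_deg a) * F a b k = - sv_bracket (sv_unit a) (g b) k"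
proof -
  have "f (sv_bracket (sv_unit (L 0)) (sv_unit a)) (sv_unit b)
      = vadd (sv_bracket (sv_unit (L 0)) (F a b)) (sv_bracket (F (L 0) b) (sv_unit a))"
    by (rule f_bracket_left) (simp_all add: sv_unit_in_SV a b)
  then have "vscale (- of_real (sv_deg a)) (F a b)
      = vadd (sv_bracket (sv_unit (L 0)) (F a b)) (sv_bracket (g b) (sv_unit a))"
    using a b by (simp add: sv_br_L0 f_vscale_unit_left g_def)
  then have "- of_real (sv_deg a) * F a b k = - of_real (sv_deg k) * F a b k + sv_bracket (g b) (sv_unit a) k"
    by (simp add: fun_eq_iff sv_bracket_L0_coeff F_finite_supp a b vscale_def vadd_def)
  moreover have "sv_bracket (g b) (sv_unit a) k = - sv_bracket (sv_unit a) (g b) k"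
    by (rule sv_bracket_antisym) (simp_all add: g_finite_supp b)
  ultimately show ?thesis by (simp add: algebra_simps)
qed

lemma sv_bracket_unit_g_self: "sv_basis eps a \<Longrightarrow> sv_bracket (sv_unit a) (g a) k = 0"
  using F_deg_identity[of a a k] by (simp add: F_self)

lemma sv_bracket_unit_g_cross:
  assumes a: "sv_basis eps a" and b: "sv_basis eps b" and k: "sv_deg k = sv_deg a + sv_deg b"
  shows "of_real (sv_deg a) * sv_bracket (sv_unit a) (g b) k
       + of_real (sv_deg b) * sv_bracket (sv_unit b) (g a) k = 0"
proof -
  have "sv_bracket (sv_unit a) (g b) k = - of_real (sv_deg b) * F a b k"
    using F_deg_identity[OF a b, of k] k by simp
  moreover have "sv_bracket (sv_unit b) (g a) k = of_real (sv_deg a) * F a b k"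
    using F_deg_identity[OF b a, of k] k unfolding F_antisym[OF b a, of k] by simp
  ultimately show ?thesis by (simp add: algebra_simps)
qed

lemma g_eq_vscale_unit:
  assumes "sv_basis eps b" "g b b = c" "\<And>k. k \<noteq> b \<Longrightarrow> sv_deg k = sv_deg b \<Longrightarrow> g b k = 0"
  shows "g b = vscale c (sv_unit b)"
  using g_homogeneous assms by (auto simp: fun_eq_iff vscale_def sv_unit_def)


lemma g_L_diag: "g (L n) (L n) = - lam * of_int n"
proof (cases "n = 1")
  case True
  then show ?thesis by (simp add: lam_def)
next
  case False
  have "of_real (sv_deg (L 1)) * sv_bracket (sv_unit (L 1)) (g (L n)) (L (1 + n))
      + of_real (sv_deg (L n)) * sv_bracket (sv_unit (L n)) (g (L 1)) (L (1 + n)) = 0"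
    by (rule sv_bracket_unit_g_cross) auto
  moreover have "sv_bracket (sv_unit (L 1)) (g (L n)) (L (1 + n)) = of_int (1 - n) * g (L n) (L n)"
    using sv_bracket_L_coeff_L[OF g_finite_supp, of "L n" 1 "1 + n"] by simp
  moreover have "sv_bracket (sv_unit (L n)) (g (L 1)) (L (1 + n)) = of_int (n - 1) * g (L 1) (L 1)"
    using sv_bracket_L_coeff_L[OF g_finite_supp, of "L 1" n "1 + n"] by simp
  ultimately have "(1 - of_int n) * (g (L n) (L n) + lam * of_int n) = 0"
    by (simp add: lam_def algebra_simps)
  moreover have "(1 - of_int n :: complex) \<noteq> 0"
    using False by (metis eq_iff_diff_eq_0 of_int_eq_1_iff)
  ultimately show ?thesis by (simp add: eq_neg_iff_add_eq_0)
qed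

lemma g_L: "g (L n) = vscale (- lam * of_int n) (sv_unit (L n))"
proof (cases "n = 0")
  case True
  then show ?thesis by (simp add: g_L0 vscale_def fun_eq_iff)
next
  case False
  have "sv_bracket (sv_unit (L n)) (g (L n)) (Y (2 * of_int n)) = 0"
    by (rule sv_bracket_unit_g_self) simp
  then have Y: "g (L n) (Y (of_int n)) = 0"
    using sv_bracket_L_coeff_Y[OF g_finite_supp, of "L n" n "2 * of_int n"] False by simp
  have "sv_bracket (sv_unit (L n)) (g (L n)) (M (2 * n)) = 0"
    by (rule sv_bracket_unit_g_self) simp
  then have M: "g (L n) (M n) = 0"
    using sv_bracket_L_coeff_M[OF g_finite_supp, of "L n" n "2 * n"] False by simp
  show ?thesis
  proof (rule g_eq_vscale_unit)
    fix k assume "k \<noteq> L n" "sv_deg k = sv_deg (L n)"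
    then show "g (L n) k = 0" using Y M by (cases k) auto
  qed (simp_all add: g_L_diag)
qed

lemma g_L_coeff_Y [simp]: "g (L n) (Y r) = 0"
  by (simp add: g_L vscale_def sv_unit_def)

lemma g_Y_coeff_L:
  assumes b: "sv_basis eps (Y r)" and r: "r \<noteq> 0" and j: "of_int j = r"
  shows "g (Y r) (L j) = 0"
proof -
  have "sv_bracket (sv_unit (Y r)) (g (Y r)) (Y (2 * r)) = 0"
    by (rule sv_bracket_unit_g_self[OF b])
  moreover have "sv_bracket (sv_unit (Y r)) (g (Y r)) (Y (2 * r)) = - of_real (of_int j / 2 - r) * g (Y r) (L j)"
    by (rule sv_bracket_Y_coeff_Y) (use j g_finite_supp[OF b] in auto)
  moreover have "(of_real (of_int j / 2 - r) :: complex) \<noteq> 0" using j r by simp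
  ultimately show ?thesis by simp
qed

lemma g_Y_coeff_M:
  assumes b: "sv_basis eps (Y r)" and r: "r \<noteq> 0" and j: "of_int j = r"
  shows "g (Y r) (M j) = 0"
proof -
  have "of_real (sv_deg (L 1)) * sv_bracket (sv_unit (L 1)) (g (Y r)) (M (1 + j))
      + of_real (sv_deg (Y r)) * sv_bracket (sv_unit (Y r)) (g (L 1)) (M (1 + j)) = 0"
    by (rule sv_bracket_unit_g_cross) (use b j in auto)
  moreover have "sv_bracket (sv_unit (L 1)) (g (Y r)) (M (1 + j)) = of_int (- j) * g (Y r) (M j)"
    using sv_bracket_L_coeff_M[OF g_finite_supp[OF b], of 1 "1 + j"] by simp
  moreover have "sv_bracket (sv_unit (Y r)) (g (L 1)) (M (1 + j)) = 0"
    using sv_bracket_Y_coeff_M[OF eps g_in_SV[of "L 1"], of r "1 + j"] b by (simp add: sv_basis_def)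
  moreover have "j \<noteq> 0" using j r by auto
  ultimately show ?thesis by simp
qed

lemma g_Y_diag:
  assumes b: "sv_basis eps (Y r)"
  shows "g (Y r) (Y r) = - lam * of_real r"
proof -
  define m :: int where "m = (if 2 * r = 1 then -1 else 1)"
  have "m \<noteq> 0" "of_int m / 2 - r \<noteq> 0" by (auto simp: m_def)
  then have nz: "(of_int m * of_real (of_int m / 2 - r) :: complex) \<noteq> 0"
    by (metis mult_eq_0_iff of_int_eq_0_iff of_real_eq_0_iff)
  have cross: "of_real (sv_deg (L m)) * sv_bracket (sv_unit (L m)) (g (Y r)) (Y (of_int m + r))
      + of_real (sv_deg (Y r)) * sv_bracket (sv_unit (Y r)) (g (L m)) (Y (of_int m + r)) = 0"
    by (rule sv_bracket_unit_g_cross) (use b in auto)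
  have L: "sv_bracket (sv_unit (L m)) (g (Y r)) (Y (of_int m + r))
      = of_real (3 * of_int m / 2 - (of_int m + r)) * g (Y r) (Y r)"
    using sv_bracket_L_coeff_Y[OF g_finite_supp[OF b], of m "of_int m + r"] by simp
  have Y: "sv_bracket (sv_unit (Y r)) (g (L m)) (Y (of_int m + r))
      = - of_real (of_int m / 2 - r) * g (L m) (L m)"
    by (rule sv_bracket_Y_coeff_Y) (use g_finite_supp in auto)
  have "of_int m * of_real (of_int m / 2 - r) * (g (Y r) (Y r) + lam * of_real r)
      = of_int m * (of_real (3 * of_int m / 2 - (of_int m + r)) * g (Y r) (Y r))
        + of_real r * (- of_real (of_int m / 2 - r) * (- lam * of_int m))"
    by (simp add: field_simps)
  also have "\<dots> = 0"
    using cross unfolding L Y g_L_diag by simp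
  finally show ?thesis using nz by (simp add: eq_neg_iff_add_eq_0)
qed

lemma g_Y:
  assumes b: "sv_basis eps (Y r)" and r: "r \<noteq> 0"
  shows "g (Y r) = vscale (- lam * of_real r) (sv_unit (Y r))"
proof (rule g_eq_vscale_unit[OF b g_Y_diag[OF b]])
  fix k assume "k \<noteq> Y r" "sv_deg k = sv_deg (Y r)"
  then show "g (Y r) k = 0" using g_Y_coeff_L[OF b r] g_Y_coeff_M[OF b r] by (cases k) auto
qed


lemma g_Y0:
  assumes b: "sv_basis eps (Y 0)"
  shows "g (Y 0) = (\<lambda>_. 0)"
proof -
  have b': "sv_basis eps (Y (-1))" using b by (simp add: sv_basis_def)
  have "sv_bracket (sv_unit (L 1)) (sv_unit (Y (-1))) = vscale (3/2) (sv_unit (Y 0))"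
    unfolding sv_bracket_units by (simp add: fun_eq_iff vscale_def sv_unit_def)
  then have "vscale (3/2) (g (Y 0)) = f (sv_unit (L 0)) (sv_bracket (sv_unit (L 1)) (sv_unit (Y (-1))))"
    using b by (simp add: f_vscale_unit_right g_def)
  also have "\<dots> = vadd (sv_bracket (g (L 1)) (sv_unit (Y (-1)))) (sv_bracket (sv_unit (L 1)) (g (Y (-1))))"
    unfolding g_def by (rule f_bracket_right) (simp_all add: sv_unit_in_SV b')
  also have "\<dots> = vadd (vscale (- lam) (sv_br (L 1) (Y (-1)))) (vscale lam (sv_br (L 1) (Y (-1))))"
    using b' by (simp add: g_L g_Y sv_bracket_vscale_unit_unit sv_bracket_unit_vscale_unit)
  finally show ?thesis by (auto simp: fun_eq_iff vscale_def vadd_def)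
qed

lemma of_int_neq_half: "real_of_int n \<noteq> 1/2"
proof
  assume "real_of_int n = 1/2"
  then have "2 * n = 1" by linarith
  then show False by presburger
qed

lemma g_M_coeff_L:
  assumes n: "n \<noteq> 0"
  shows "g (M n) (L n) = 0"
proof -
  have "sv_bracket (sv_unit (M n)) (g (M n)) (M (2 * n)) = 0"
    by (rule sv_bracket_unit_g_self) simp
  then show ?thesis
    using sv_bracket_M_coeff_M[OF g_finite_supp, of "M n" n "2 * n"] n by simp
qed

lemma g_M_coeff_Y: "g (M n) (Y (of_int n)) = 0"
proof -
  have "of_real (sv_deg (L 1)) * sv_bracket (sv_unit (L 1)) (g (M n)) (Y (1 + of_int n))
      + of_real (sv_deg (M n)) * sv_bracket (sv_unit (M n)) (g (L 1)) (Y (1 + of_int n)) = 0"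
    by (rule sv_bracket_unit_g_cross) auto
  moreover have "sv_bracket (sv_unit (L 1)) (g (M n)) (Y (1 + of_int n))
      = of_real (1/2 - of_int n) * g (M n) (Y (of_int n))"
    using sv_bracket_L_coeff_Y[OF g_finite_supp, of "M n" 1 "1 + of_int n"] by simp
  moreover have "(of_real (1/2 - of_int n) :: complex) \<noteq> 0"
    using of_int_neq_half[of n] by (subst of_real_eq_0_iff) simp
  ultimately show ?thesis by (simp add: sv_bracket_M_coeff_Y)
qed

lemma g_M_diag:
  assumes n: "n \<noteq> 0"
  shows "g (M n) (M n) = - lam * of_int n"
proof -
  have "of_real (sv_deg (L 1)) * sv_bracket (sv_unit (L 1)) (g (M n)) (M (1 + n))
      + of_real (sv_deg (M n)) * sv_bracket (sv_unit (M n)) (g (L 1)) (M (1 + n)) = 0"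
    by (rule sv_bracket_unit_g_cross) auto
  moreover have "sv_bracket (sv_unit (L 1)) (g (M n)) (M (1 + n)) = - of_int n * g (M n) (M n)"
    using sv_bracket_L_coeff_M[OF g_finite_supp, of "M n" 1 "1 + n"] by simp
  moreover have "sv_bracket (sv_unit (M n)) (g (L 1)) (M (1 + n)) = of_int n * g (L 1) (L 1)"
    using sv_bracket_M_coeff_M[OF g_finite_supp, of "L 1" n "1 + n"] by simp
  ultimately have "of_int n * (g (M n) (M n) + lam * of_int n) = 0"
    by (simp add: lam_def algebra_simps) metis
  with n show ?thesis by (simp add: eq_neg_iff_add_eq_0)
qed

lemma g_M:
  assumes n: "n \<noteq> 0"
  shows "g (M n) = vscale (- lam * of_int n) (sv_unit (M n))"
proof (rule g_eq_vscale_unit[OF _ g_M_diag[OF n]])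
  fix k assume "k \<noteq> M n" "sv_deg k = sv_deg (M n)"
  then show "g (M n) k = 0" using g_M_coeff_L[OF n] g_M_coeff_Y by (cases k) auto
qed simp

lemma g_M0: "g (M 0) = (\<lambda>_. 0)"
proof -
  have "sv_bracket (sv_unit (L 1)) (sv_unit (M (-1))) = sv_unit (M 0)"
    unfolding sv_bracket_units by (simp add: fun_eq_iff vscale_def sv_unit_def)
  then have "g (M 0) = f (sv_unit (L 0)) (sv_bracket (sv_unit (L 1)) (sv_unit (M (-1))))"
    by (simp add: g_def)
  also have "\<dots> = vadd (sv_bracket (g (L 1)) (sv_unit (M (-1)))) (sv_bracket (sv_unit (L 1)) (g (M (-1))))"
    unfolding g_def by (rule f_bracket_right) (simp_all add: sv_unit_in_SV)
  also have "\<dots> = vadd (vscale (- lam) (sv_br (L 1) (M (-1)))) (vscale lam (sv_br (L 1) (M (-1))))"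
    by (simp add: g_L g_M sv_bracket_vscale_unit_unit sv_bracket_unit_vscale_unit)
  finally show ?thesis by (auto simp: fun_eq_iff vscale_def vadd_def)
qed

lemma g_eq:
  assumes "sv_basis eps b"
  shows "g b = vscale (- lam * of_real (sv_deg b)) (sv_unit b)"
proof (cases b)
  case (L n)
  then show ?thesis by (simp add: g_L)
next
  case (Y r)
  then show ?thesis
    using assms g_Y0 g_Y by (cases "r = 0") (auto simp: vscale_def)
next
  case (M n)
  then show ?thesis
    using g_M0 g_M by (cases "n = 0") (auto simp: vscale_def)
qed


lemma F_coeff_eq:
  assumes a: "sv_basis eps a" and b: "sv_basis eps b"
    and nd: "\<not> (sv_deg a = sv_deg b \<and> sv_deg k = sv_deg a)"
  shows "F a b k = lam * sv_br a b k"
proof -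
  have E1: "of_real (sv_deg k - sv_deg a) * F a b k = lam * of_real (sv_deg b) * sv_br a b k"
    using F_deg_identity[OF a b, of k]
    unfolding g_eq[OF b] sv_bracket_unit_vscale_unit by (simp add: vscale_def)
  have E2: "of_real (sv_deg k - sv_deg b) * F a b k = lam * of_real (sv_deg a) * sv_br a b k"
    using F_deg_identity[OF b a, of k]
    unfolding g_eq[OF a] sv_bracket_unit_vscale_unit F_antisym[OF b a, of k]
    by (simp add: vscale_def sv_br_antisym[of b a k])
  show ?thesis
  proof (cases "sv_br a b k = 0")
    case True
    with E1 E2 have "F a b k = 0 \<or> (sv_deg k = sv_deg a \<and> sv_deg k = sv_deg b)" by auto
    with nd True show ?thesis by auto
  next
    case False
    then have k: "sv_deg k = sv_deg a + sv_deg b" by (rule sv_br_homogeneous[OF eps a b])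
    with E1 have "of_real (sv_deg b) * F a b k = of_real (sv_deg b) * (lam * sv_br a b k)"
      by (simp add: algebra_simps)
    moreover from E2 k have "of_real (sv_deg a) * F a b k = of_real (sv_deg a) * (lam * sv_br a b k)"
      by (simp add: algebra_simps)
    moreover have "sv_deg a \<noteq> 0 \<or> sv_deg b \<noteq> 0" using nd k by auto
    ultimately show ?thesis by auto
  qed
qed

lemma F_eq_of_deg_ne:
  "sv_basis eps a \<Longrightarrow> sv_basis eps b \<Longrightarrow> sv_deg a \<noteq> sv_deg b \<Longrightarrow> F a b = vscale lam (sv_br a b)"
  by (rule ext) (simp add: F_coeff_eq vscale_def)

lemma F_eq:
  assumes a: "sv_basis eps a" and b: "sv_basis eps b"
  shows "F a b = vscale lam (sv_br a b)"
proof (cases "sv_deg a = sv_deg b")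
  case False
  then show ?thesis using F_eq_of_deg_ne a b by blast
next
  case True
  obtain m y c where r: "sv_br (L m) y = vscale c (sv_unit a)" "c \<noteq> 0" "sv_basis eps y"
      "of_int m \<noteq> sv_deg a" "sv_deg y \<noteq> sv_deg a"
    using exists_sv_br_L_eq_unit[OF a] by blast
  have "vscale c (F a b) = f (sv_bracket (sv_unit (L m)) (sv_unit y)) (sv_unit b)"
    using a b r(1) by (simp add: f_vscale_unit_left)
  also have "\<dots> = vadd (sv_bracket (sv_unit (L m)) (F y b)) (sv_bracket (F (L m) b) (sv_unit y))"
    by (rule f_bracket_left) (simp_all add: sv_unit_in_SV b r)
  also have "\<dots> = vscale lam (vadd (sv_bracket (sv_unit (L m)) (sv_br y b)) (sv_bracket (sv_br (L m) b) (sv_unit y)))"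
    using r True b F_eq_of_deg_ne[OF r(3) b] F_eq_of_deg_ne[of "L m" b]
    by (simp add: sv_bracket_vscale_left sv_bracket_vscale_right finite_sv_supp_sv_br)
      (simp add: vadd_def vscale_def fun_eq_iff algebra_simps)
  also have "\<dots> = vscale lam (sv_bracket (sv_br (L m) y) (sv_unit b))"
    by (simp add: sv_br_jacobi_L[OF eps r(3) b])
  also have "\<dots> = vscale (lam * c) (sv_br a b)"
    unfolding r(1) by (simp add: sv_bracket_vscale_unit_unit)
  finally have "vscale c (F a b) = vscale c (vscale lam (sv_br a b))"
    by (simp add: mult.commute)
  with r(2) show ?thesis
    by (auto simp: fun_eq_iff vscale_def)
qed

lemma f_unit_left_eq:
  assumes a: "sv_basis eps a" and y: "y \<in> SV eps"
  shows "f (sv_unit a) y = vscale lam (sv_bracket (sv_unit a) y)"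
proof (rule SV_linear_eq_on_basis[OF _ _ _ _ _ y])
  fix x z assume "x \<in> SV eps" "z \<in> SV eps"
  then show "f (sv_unit a) (vadd x z) = vadd (f (sv_unit a) x) (f (sv_unit a) z)"
    and "vscale lam (sv_bracket (sv_unit a) (vadd x z))
        = vadd (vscale lam (sv_bracket (sv_unit a) x)) (vscale lam (sv_bracket (sv_unit a) z))"
    by (simp_all add: f_vadd_right sv_unit_in_SV a sv_bracket_vadd_right SV_finite_supp)
      (simp add: vadd_def vscale_def fun_eq_iff algebra_simps)
next
  fix c x assume "x \<in> SV eps"
  then show "f (sv_unit a) (vscale c x) = vscale c (f (sv_unit a) x)"
    and "vscale lam (sv_bracket (sv_unit a) (vscale c x)) = vscale c (vscale lam (sv_bracket (sv_unit a) x))"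
    by (simp_all add: f_vscale_right sv_unit_in_SV a sv_bracket_vscale_right SV_finite_supp mult.commute)
next
  fix b assume "sv_basis eps b"
  then show "f (sv_unit a) (sv_unit b) = vscale lam (sv_bracket (sv_unit a) (sv_unit b))"
    using F_eq[OF a] by simp
qed

lemma f_eq:
  assumes x: "x \<in> SV eps" and y: "y \<in> SV eps"
  shows "f x y = vscale lam (sv_bracket x y)"
proof (rule SV_linear_eq_on_basis[where hA = "\<lambda>x. f x y", OF _ _ _ _ _ x])
  fix x z assume "x \<in> SV eps" "z \<in> SV eps"
  then show "f (vadd x z) y = vadd (f x y) (f z y)"
    and "vscale lam (sv_bracket (vadd x z) y) = vadd (vscale lam (sv_bracket x y)) (vscale lam (sv_bracket z y))"
    using y by (simp_all add: f_vadd_left sv_bracket_vadd_left SV_finite_supp)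
      (simp add: vadd_def vscale_def fun_eq_iff algebra_simps)
next
  fix c x assume "x \<in> SV eps"
  then show "f (vscale c x) y = vscale c (f x y)"
    and "vscale lam (sv_bracket (vscale c x) y) = vscale c (vscale lam (sv_bracket x y))"
    using y by (simp_all add: f_vscale_left sv_bracket_vscale_left SV_finite_supp mult.commute)
next
  fix b assume "sv_basis eps b"
  then show "f (sv_unit b) y = vscale lam (sv_bracket (sv_unit b) y)"
    using f_unit_left_eq y by blast
qed

end

theorem corollary3p7:
  fixes eps :: real
    and f :: "(sv_idx \<Rightarrow> complex) \<Rightarrow> (sv_idx \<Rightarrow> complex) \<Rightarrow> (sv_idx \<Rightarrow> complex)"
  assumes "eps = 0 \<or> eps = 1/2"
    and "sv_biderivation eps f"
    and "sv_skew eps f"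
  shows "\<exists>lam::complex. \<forall>x\<in>SV eps. \<forall>y\<in>SV eps. f x y = vscale lam (sv_bracket x y)"
proof -
  interpret skew_biderivation eps f using assms by unfold_locales
  show ?thesis using f_eq by blast
qed

end
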